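(* For every integer $k\geq1$, the 2-group $\mathbb{S}ym(\mathsf D_{8k})$ is not split, i.e. the dihedral group $\mathsf D_{8k}$ is not permutationally split.
   Context: $\mathsf D_n=\langle r,s\mid r^n=s^2=e,\ sr=r^{-1}s\rangle$ is the dihedral group of order $2n$, regarded as a one-object groupoid. For a groupoid $\mathcal K$, $\mathbb{S}ym(\mathcal K)$ is the 2-group (monoidal groupoid with weakly invertible objects) whose objects are self-equivalences of $\mathcal K$, morphisms natural isomorphisms, tensor product composition. A 2-group is split if it is equivalent, via a monoidal functor admitting a pseudo-inverse up to monoidal natural isomorphism, to an elementary 2-group $\mathsf A[1]\rtimes\mathsf G[0]$ for some group $\mathsf G$ and left $\mathsf G$-module $\mathsf A$: the strict 2-group with objects the elements of $\mathsf G$, morphisms $(a,g):g\to g$ ($a\in\mathsf A$), composition $(a',g)\circ(a,g)=(a'+a,g)$, tensor $g\otimes g'=gg'$, $(a,g)\otimes(a',g')=(a+g\lhd a',gg')$, trivial associator and unitors. A group $\mathsf G$ is permutationally split if $\mathbb{S}ym(\mathsf G)$ is split. *)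

theory Defs
  imports "HOL-Algebra.Group" "HOL-Library.FuncSet"
begin

text \<open>Morphisms are elements of a set with domain/codomain maps.
  mg_cmp T g f is the composite g after f (defined when dom g = cod f).
  mg_asc x y z : (x*y)*z -> x*(y*z), mg_lun x : I*x -> x, mg_run x : x*I -> x.\<close>

record ('o, 'm) mgpd =
  mg_obj :: "'o set"
  mg_mor :: "'m set"
  mg_dom :: "'m \<Rightarrow> 'o"
  mg_cod :: "'m \<Rightarrow> 'o"
  mg_cmp :: "'m \<Rightarrow> 'm \<Rightarrow> 'm"
  mg_idn :: "'o \<Rightarrow> 'm"
  mg_tno :: "'o \<Rightarrow> 'o \<Rightarrow> 'o"
  mg_tnm :: "'m \<Rightarrow> 'm \<Rightarrow> 'm"
  mg_unt :: "'o"
  mg_asc :: "'o \<Rightarrow> 'o \<Rightarrow> 'o \<Rightarrow> 'm"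
  mg_lun :: "'o \<Rightarrow> 'm"
  mg_run :: "'o \<Rightarrow> 'm"

definition mg_arr :: "('o,'m) mgpd \<Rightarrow> 'm \<Rightarrow> 'o \<Rightarrow> 'o \<Rightarrow> bool" where
  "mg_arr T f a b \<longleftrightarrow> f \<in> mg_mor T \<and> mg_dom T f = a \<and> mg_cod T f = b"

definition mg_iso :: "('o,'m) mgpd \<Rightarrow> 'm \<Rightarrow> bool" where
  "mg_iso T f \<longleftrightarrow> f \<in> mg_mor T \<and>
     (\<exists>g\<in>mg_mor T. mg_dom T g = mg_cod T f \<and> mg_cod T g = mg_dom T f \<and>
        mg_cmp T g f = mg_idn T (mg_dom T f) \<and> mg_cmp T f g = mg_idn T (mg_cod T f))"

definition mg_functor ::
  "('o,'m) mgpd \<Rightarrow> ('p,'n) mgpd \<Rightarrow> ('o \<Rightarrow> 'p) \<Rightarrow> ('m \<Rightarrow> 'n) \<Rightarrow> bool" where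
  "mg_functor S T Fo Fm \<longleftrightarrow>
     Fo \<in> mg_obj S \<rightarrow> mg_obj T \<and>
     (\<forall>f\<in>mg_mor S. mg_arr T (Fm f) (Fo (mg_dom S f)) (Fo (mg_cod S f))) \<and>
     (\<forall>a\<in>mg_obj S. Fm (mg_idn S a) = mg_idn T (Fo a)) \<and>
     (\<forall>f\<in>mg_mor S. \<forall>g\<in>mg_mor S. mg_dom S g = mg_cod S f \<longrightarrow>
        Fm (mg_cmp S g f) = mg_cmp T (Fm g) (Fm f))"

definition monoidal_functor ::
  "('o,'m) mgpd \<Rightarrow> ('p,'n) mgpd \<Rightarrow> ('o \<Rightarrow> 'p) \<Rightarrow> ('m \<Rightarrow> 'n)
   \<Rightarrow> ('o \<Rightarrow> 'o \<Rightarrow> 'n) \<Rightarrow> 'n \<Rightarrow> bool" where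
  "monoidal_functor S T Fo Fm mu eps \<longleftrightarrow>
     mg_functor S T Fo Fm \<and>
     (\<forall>x\<in>mg_obj S. \<forall>y\<in>mg_obj S.
        mg_arr T (mu x y) (mg_tno T (Fo x) (Fo y)) (Fo (mg_tno S x y)) \<and> mg_iso T (mu x y)) \<and>
     mg_arr T eps (mg_unt T) (Fo (mg_unt S)) \<and> mg_iso T eps \<and>
     (\<forall>f\<in>mg_mor S. \<forall>g\<in>mg_mor S.
        mg_cmp T (mu (mg_cod S f) (mg_cod S g)) (mg_tnm T (Fm f) (Fm g)) =
        mg_cmp T (Fm (mg_tnm S f g)) (mu (mg_dom S f) (mg_dom S g))) \<and>
     (\<forall>x\<in>mg_obj S. \<forall>y\<in>mg_obj S. \<forall>z\<in>mg_obj S.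
        mg_cmp T (Fm (mg_asc S x y z))
          (mg_cmp T (mu (mg_tno S x y) z) (mg_tnm T (mu x y) (mg_idn T (Fo z)))) =
        mg_cmp T (mu x (mg_tno S y z))
          (mg_cmp T (mg_tnm T (mg_idn T (Fo x)) (mu y z)) (mg_asc T (Fo x) (Fo y) (Fo z)))) \<and>
     (\<forall>x\<in>mg_obj S.
        mg_cmp T (Fm (mg_lun S x)) (mg_cmp T (mu (mg_unt S) x) (mg_tnm T eps (mg_idn T (Fo x))))
          = mg_lun T (Fo x)) \<and>
     (\<forall>x\<in>mg_obj S.
        mg_cmp T (Fm (mg_run S x)) (mg_cmp T (mu x (mg_unt S)) (mg_tnm T (mg_idn T (Fo x)) eps))
          = mg_run T (Fo x))"

definition monoidal_nat_iso ::
  "('o,'m) mgpd \<Rightarrow> ('p,'n) mgpd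
   \<Rightarrow> ('o \<Rightarrow> 'p) \<Rightarrow> ('m \<Rightarrow> 'n) \<Rightarrow> ('o \<Rightarrow> 'o \<Rightarrow> 'n) \<Rightarrow> 'n
   \<Rightarrow> ('o \<Rightarrow> 'p) \<Rightarrow> ('m \<Rightarrow> 'n) \<Rightarrow> ('o \<Rightarrow> 'o \<Rightarrow> 'n) \<Rightarrow> 'n
   \<Rightarrow> ('o \<Rightarrow> 'n) \<Rightarrow> bool" where
  "monoidal_nat_iso S T Fo Fm muF epsF Go Gm muG epsG \<theta> \<longleftrightarrow>
     (\<forall>x\<in>mg_obj S. mg_arr T (\<theta> x) (Fo x) (Go x) \<and> mg_iso T (\<theta> x)) \<and>
     (\<forall>f\<in>mg_mor S. mg_cmp T (\<theta> (mg_cod S f)) (Fm f) = mg_cmp T (Gm f) (\<theta> (mg_dom S f))) \<and>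
     (\<forall>x\<in>mg_obj S. \<forall>y\<in>mg_obj S.
        mg_cmp T (\<theta> (mg_tno S x y)) (muF x y) = mg_cmp T (muG x y) (mg_tnm T (\<theta> x) (\<theta> y))) \<and>
     mg_cmp T (\<theta> (mg_unt S)) epsF = epsG"

definition mg_equivalent :: "('o,'m) mgpd \<Rightarrow> ('p,'n) mgpd \<Rightarrow> bool" where
  "mg_equivalent S T \<longleftrightarrow>
     (\<exists>Fo Fm mu eps Go Gm nu eta \<theta> \<theta>'.
        monoidal_functor S T Fo Fm mu eps \<and>
        monoidal_functor T S Go Gm nu eta \<and>
        monoidal_nat_iso S S
          (Go \<circ> Fo) (Gm \<circ> Fm) (\<lambda>x y. mg_cmp S (Gm (mu x y)) (nu (Fo x) (Fo y))) (mg_cmp S (Gm eps) eta)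
          id id (\<lambda>x y. mg_idn S (mg_tno S x y)) (mg_idn S (mg_unt S)) \<theta> \<and>
        monoidal_nat_iso T T
          (Fo \<circ> Go) (Fm \<circ> Gm) (\<lambda>x y. mg_cmp T (Fm (nu x y)) (mu (Go x) (Go y))) (mg_cmp T (Fm eta) eps)
          id id (\<lambda>x y. mg_idn T (mg_tno T x y)) (mg_idn T (mg_unt T)) \<theta>')"

definition left_module :: "'h monoid \<Rightarrow> 'a monoid \<Rightarrow> ('h \<Rightarrow> 'a \<Rightarrow> 'a) \<Rightarrow> bool" where
  "left_module H A act \<longleftrightarrow> group H \<and> comm_group A \<and>
     (\<forall>g\<in>carrier H. act g \<in> hom A A) \<and>
     (\<forall>a\<in>carrier A. act \<one>\<^bsub>H\<^esub> a = a) \<and>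
     (\<forall>g\<in>carrier H. \<forall>h\<in>carrier H. \<forall>a\<in>carrier A. act (g \<otimes>\<^bsub>H\<^esub> h) a = act g (act h a))"

definition elementary :: "'h monoid \<Rightarrow> 'a monoid \<Rightarrow> ('h \<Rightarrow> 'a \<Rightarrow> 'a) \<Rightarrow> ('h, 'a \<times> 'h) mgpd" where
  "elementary H A act =
    \<lparr> mg_obj = carrier H,
      mg_mor = carrier A \<times> carrier H,
      mg_dom = snd, mg_cod = snd,
      mg_cmp = (\<lambda>m' m. (fst m' \<otimes>\<^bsub>A\<^esub> fst m, snd m)),
      mg_idn = (\<lambda>g. (\<one>\<^bsub>A\<^esub>, g)),
      mg_tno = (\<lambda>g g'. g \<otimes>\<^bsub>H\<^esub> g'),
      mg_tnm = (\<lambda>m m'. (fst m \<otimes>\<^bsub>A\<^esub> act (snd m) (fst m'), snd m \<otimes>\<^bsub>H\<^esub> snd m')),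
      mg_unt = \<one>\<^bsub>H\<^esub>,
      mg_asc = (\<lambda>x y z. (\<one>\<^bsub>A\<^esub>, x \<otimes>\<^bsub>H\<^esub> y \<otimes>\<^bsub>H\<^esub> z)),
      mg_lun = (\<lambda>x. (\<one>\<^bsub>A\<^esub>, x)),
      mg_run = (\<lambda>x. (\<one>\<^bsub>A\<^esub>, x)) \<rparr>"

definition split_2group :: "('o,'m) mgpd \<Rightarrow> 'h monoid \<Rightarrow> 'a monoid \<Rightarrow> ('h \<Rightarrow> 'a \<Rightarrow> 'a) \<Rightarrow> bool" where
  "split_2group T H A act \<longleftrightarrow> left_module H A act \<and> mg_equivalent (elementary H A act) T"

text \<open>Self-equivalences of the one-object groupoid G are exactly the group automorphisms
  (stored extensionally on the carrier). A natural isomorphism phi => psi is an element g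
  with g * phi x = psi x * g (composition in G is the group product). Morphisms are stored
  as triples (source, target, component). Tensor = composition of functors; the horizontal
  composite of g : phi => phi' and g' : psi => psi' has component g * phi g'.\<close>

definition Sym :: "'g monoid \<Rightarrow> ('g \<Rightarrow> 'g, ('g \<Rightarrow> 'g) \<times> ('g \<Rightarrow> 'g) \<times> 'g) mgpd" where
  "Sym G =
    (let Ob = {\<phi>. \<phi> \<in> iso G G \<and> \<phi> \<in> extensional (carrier G)} in
    \<lparr> mg_obj = Ob,
      mg_mor = {(\<phi>, \<psi>, g). \<phi> \<in> Ob \<and> \<psi> \<in> Ob \<and> g \<in> carrier G \<and>
                   (\<forall>x\<in>carrier G. g \<otimes>\<^bsub>G\<^esub> \<phi> x = \<psi> x \<otimes>\<^bsub>G\<^esub> g)},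
      mg_dom = fst, mg_cod = (\<lambda>m. fst (snd m)),
      mg_cmp = (\<lambda>m' m. (fst m, fst (snd m'), snd (snd m') \<otimes>\<^bsub>G\<^esub> snd (snd m))),
      mg_idn = (\<lambda>\<phi>. (\<phi>, \<phi>, \<one>\<^bsub>G\<^esub>)),
      mg_tno = (\<lambda>\<phi> \<psi>. compose (carrier G) \<phi> \<psi>),
      mg_tnm = (\<lambda>m m'. (compose (carrier G) (fst m) (fst m'),
                        compose (carrier G) (fst (snd m)) (fst (snd m')),
                        snd (snd m) \<otimes>\<^bsub>G\<^esub> fst m (snd (snd m')))),
      mg_unt = restrict id (carrier G),
      mg_asc = (\<lambda>x y z. let w = compose (carrier G) x (compose (carrier G) y z) in (w, w, \<one>\<^bsub>G\<^esub>)),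
      mg_lun = (\<lambda>x. (x, x, \<one>\<^bsub>G\<^esub>)),
      mg_run = (\<lambda>x. (x, x, \<one>\<^bsub>G\<^esub>)) \<rparr>)"

text \<open>(i, b) represents r^i s^b with 0 <= i < n; (i,b)(j,c) = (i + (-1)^b j mod n, b xor c).\<close>

definition dihedral :: "nat \<Rightarrow> (int \<times> bool) monoid" where
  "dihedral n =
    \<lparr> carrier = {0..<int n} \<times> UNIV,
      mult = (\<lambda>(i, b) (j, c). ((i + (if b then - j else j)) mod int n, b \<noteq> c)),
      one = (0, False) \<rparr>"

end

theory Submission
  imports Defs
begin

text \<open>A splitting \<open>A[1] \<rtimes> H[0] \<simeq> Sym(K)\<close> identifies \<open>A\<close> with the automorphisms of the
  identity, i.e. with the centre \<open>Z(K)\<close>, on which \<open>H\<close> acts through automorphisms of \<open>K\<close>.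
  If every automorphism fixes \<open>Z(K)\<close> pointwise, this action is trivial, and then the
  associativity and unit constraints of the pseudo-inverse force the two whiskerings
  \<open>\<alpha> \<otimes> id\<^sub>\<phi>\<close> and \<open>id\<^sub>\<phi> \<otimes> \<alpha>\<close> of any \<open>\<alpha> : \<phi>\<^sup>2 \<Rightarrow> 1\<close> to have the same image. If \<open>\<alpha>\<close> is
  given by an element \<open>h\<close> (so that \<open>\<phi>\<^sup>2\<close> is conjugation by \<open>h\<close>), the two whiskerings have components \<open>h\<close> and
  \<open>\<phi> h\<close>, so faithfulness gives \<open>\<phi> h = h\<close>. In \<open>D\<^sub>8\<^sub>k\<close> the centre is \<open>{1, r\<^sup>4\<^sup>k}\<close>, and
  \<open>\<phi> : r \<mapsto> r\<^sup>4\<^sup>k\<^sup>+\<^sup>1, s \<mapsto> r s\<close> squares to conjugation by \<open>h = r\<^sup>6\<^sup>k\<^sup>-\<^sup>1\<close> while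
  \<open>\<phi> h = r\<^sup>2\<^sup>k\<^sup>-\<^sup>1\<close>.\<close>

definition center :: "('g, 'b) monoid_scheme \<Rightarrow> 'g set" where
  "center K = {w \<in> carrier K. \<forall>x\<in>carrier K. w \<otimes>\<^bsub>K\<^esub> x = x \<otimes>\<^bsub>K\<^esub> w}"

lemma (in group) iso_maps_center:
  assumes \<psi>: "\<psi> \<in> iso G G" and w: "w \<in> center G"
  shows "\<psi> w \<in> center G"
proof -
  have hom: "\<psi> \<in> hom G G" and surj: "\<psi> ` carrier G = carrier G"
    using \<psi> by (auto simp: iso_def bij_betw_def)
  have wC: "w \<in> carrier G" using w by (simp add: center_def)
  have "\<psi> w \<otimes> y = y \<otimes> \<psi> w" if "y \<in> carrier G" for y
  proof -
    obtain x where x: "x \<in> carrier G" "y = \<psi> x" using \<open>y \<in> carrier G\<close> surj by blast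
    have "\<psi> w \<otimes> \<psi> x = \<psi> (w \<otimes> x)" using hom_mult[OF hom wC x(1)] by simp
    also have "\<dots> = \<psi> (x \<otimes> w)" using w x(1) by (simp add: center_def)
    also have "\<dots> = \<psi> x \<otimes> \<psi> w" using hom_mult[OF hom x(1) wC] by simp
    finally show ?thesis using x(2) by simp
  qed
  then show ?thesis using hom_in_carrier[OF hom wC] by (simp add: center_def)
qed

lemma (in group) iso_fixes_small_center:
  assumes small: "center G \<subseteq> {\<one>, c}" and \<psi>: "\<psi> \<in> iso G G" and w: "w \<in> center G"
  shows "\<psi> w = w"
proof -
  have hom: "\<psi> \<in> hom G G" and inj: "inj_on \<psi> (carrier G)"
    using \<psi> by (auto simp: iso_def bij_betw_def)
  have \<psi>_one: "\<psi> \<one> = \<one>" using hom_one[OF hom is_group is_group] .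
  have "\<psi> w \<noteq> \<one>" if "w \<noteq> \<one>"
    using inj_onD[OF inj, of w \<one>] that w \<psi>_one by (auto simp: center_def)
  then show ?thesis using small iso_maps_center[OF \<psi> w] w \<psi>_one by blast
qed

lemma Sym_obj_iff:
  "\<psi> \<in> mg_obj (Sym K) \<longleftrightarrow> \<psi> \<in> iso K K \<and> \<psi> \<in> extensional (carrier K)"
  by (simp add: Sym_def Let_def)

lemma Sym_mor_iff:
  "(\<psi>, \<chi>, g) \<in> mg_mor (Sym K) \<longleftrightarrow> \<psi> \<in> mg_obj (Sym K) \<and> \<chi> \<in> mg_obj (Sym K) \<and> g \<in> carrier K \<and>
     (\<forall>x\<in>carrier K. g \<otimes>\<^bsub>K\<^esub> \<psi> x = \<chi> x \<otimes>\<^bsub>K\<^esub> g)"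
  by (simp add: Sym_def Let_def)

lemma Sym_structure [simp]:
  "mg_dom (Sym K) = fst"
  "mg_cod (Sym K) = (\<lambda>m. fst (snd m))"
  "mg_cmp (Sym K) = (\<lambda>m' m. (fst m, fst (snd m'), snd (snd m') \<otimes>\<^bsub>K\<^esub> snd (snd m)))"
  "mg_idn (Sym K) = (\<lambda>\<phi>. (\<phi>, \<phi>, \<one>\<^bsub>K\<^esub>))"
  "mg_tno (Sym K) = compose (carrier K)"
  "mg_tnm (Sym K) = (\<lambda>m m'. (compose (carrier K) (fst m) (fst m'),
                        compose (carrier K) (fst (snd m)) (fst (snd m')),
                        snd (snd m) \<otimes>\<^bsub>K\<^esub> fst m (snd (snd m'))))"
  "mg_unt (Sym K) = restrict id (carrier K)"
  "mg_asc (Sym K) = (\<lambda>x y z. let w = compose (carrier K) x (compose (carrier K) y z) in (w, w, \<one>\<^bsub>K\<^esub>))"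
  "mg_lun (Sym K) = (\<lambda>x. (x, x, \<one>\<^bsub>K\<^esub>))"
  "mg_run (Sym K) = (\<lambda>x. (x, x, \<one>\<^bsub>K\<^esub>))"
  by (simp_all add: Sym_def Let_def fun_eq_iff)

lemma elementary_structure [simp]:
  "mg_obj (elementary H A act) = carrier H"
  "mg_mor (elementary H A act) = carrier A \<times> carrier H"
  "mg_dom (elementary H A act) = snd"
  "mg_cod (elementary H A act) = snd"
  "mg_cmp (elementary H A act) = (\<lambda>m' m. (fst m' \<otimes>\<^bsub>A\<^esub> fst m, snd m))"
  "mg_idn (elementary H A act) = (\<lambda>g. (\<one>\<^bsub>A\<^esub>, g))"
  "mg_tno (elementary H A act) = (\<lambda>g g'. g \<otimes>\<^bsub>H\<^esub> g')"
  "mg_tnm (elementary H A act) = (\<lambda>m m'. (fst m \<otimes>\<^bsub>A\<^esub> act (snd m) (fst m'), snd m \<otimes>\<^bsub>H\<^esub> snd m'))"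
  "mg_unt (elementary H A act) = \<one>\<^bsub>H\<^esub>"
  "mg_asc (elementary H A act) = (\<lambda>x y z. (\<one>\<^bsub>A\<^esub>, x \<otimes>\<^bsub>H\<^esub> y \<otimes>\<^bsub>H\<^esub> z))"
  "mg_lun (elementary H A act) = (\<lambda>x. (\<one>\<^bsub>A\<^esub>, x))"
  "mg_run (elementary H A act) = (\<lambda>x. (\<one>\<^bsub>A\<^esub>, x))"
  by (simp_all add: elementary_def)

context
  fixes K :: "'g monoid" (structure)
  assumes K: "group K"
begin

interpretation group K by (rule K)

lemma Sym_obj_hom: "\<psi> \<in> mg_obj (Sym K) \<Longrightarrow> \<psi> \<in> hom K K"
  by (simp add: Sym_obj_iff iso_def)

lemma Sym_obj_closed: "\<psi> \<in> mg_obj (Sym K) \<Longrightarrow> x \<in> carrier K \<Longrightarrow> \<psi> x \<in> carrier K"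
  by (rule hom_in_carrier[OF Sym_obj_hom])

lemma Sym_obj_one: "\<psi> \<in> mg_obj (Sym K) \<Longrightarrow> \<psi> \<one> = \<one>"
  by (rule hom_one[OF Sym_obj_hom is_group is_group])

lemma Sym_obj_surj: "\<psi> \<in> mg_obj (Sym K) \<Longrightarrow> \<psi> ` carrier K = carrier K"
  by (simp add: Sym_obj_iff iso_def bij_betw_def)

lemma Sym_obj_compose:
  "\<psi> \<in> mg_obj (Sym K) \<Longrightarrow> \<chi> \<in> mg_obj (Sym K) \<Longrightarrow> compose (carrier K) \<psi> \<chi> \<in> mg_obj (Sym K)"
  by (auto simp: Sym_obj_iff iso_def hom_compose bij_betw_compose)

lemma Sym_unit_obj: "restrict id (carrier K) \<in> mg_obj (Sym K)"
  by (auto simp: Sym_obj_iff iso_def hom_def bij_betw_def inj_on_def)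

lemma Sym_unit_compose:
  assumes "\<psi> \<in> mg_obj (Sym K)"
  shows "compose (carrier K) (restrict id (carrier K)) \<psi> = \<psi>"
    and "compose (carrier K) \<psi> (restrict id (carrier K)) = \<psi>"
  using assms Sym_obj_closed[OF assms]
  by (auto simp: fun_eq_iff compose_def Sym_obj_iff extensional_def)

lemma Sym_compose_assoc:
  fixes \<psi> \<chi> \<rho> :: "'g \<Rightarrow> 'g"
  assumes "\<rho> \<in> mg_obj (Sym K)"
  shows "compose (carrier K) (compose (carrier K) \<psi> \<chi>) \<rho> = compose (carrier K) \<psi> (compose (carrier K) \<chi> \<rho>)"
  using compose_assoc[of \<rho> "carrier K" "carrier K" \<psi> \<chi>] Sym_obj_closed[OF assms] by simp

lemma Sym_mor_component: "m \<in> mg_mor (Sym K) \<Longrightarrow> snd (snd m) \<in> carrier K"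
  by (cases m) (simp add: Sym_mor_iff)

lemma Sym_idn_mor: "\<psi> \<in> mg_obj (Sym K) \<Longrightarrow> (\<psi>, \<psi>, \<one>) \<in> mg_mor (Sym K)"
  using Sym_obj_closed by (simp add: Sym_mor_iff)

lemma Sym_tnm_mor:
  assumes f: "(\<psi>, \<chi>, g) \<in> mg_mor (Sym K)" and f': "(\<psi>', \<chi>', g') \<in> mg_mor (Sym K)"
  shows "mg_tnm (Sym K) (\<psi>, \<chi>, g) (\<psi>', \<chi>', g') \<in> mg_mor (Sym K)"
proof -
  have objs: "\<psi> \<in> mg_obj (Sym K)" "\<chi> \<in> mg_obj (Sym K)" "\<psi>' \<in> mg_obj (Sym K)" "\<chi>' \<in> mg_obj (Sym K)"
    and g: "g \<in> carrier K" and g': "g' \<in> carrier K"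
    and nat: "\<And>x. x \<in> carrier K \<Longrightarrow> g \<otimes> \<psi> x = \<chi> x \<otimes> g"
    and nat': "\<And>x. x \<in> carrier K \<Longrightarrow> g' \<otimes> \<psi>' x = \<chi>' x \<otimes> g'"
    using f f' by (simp_all add: Sym_mor_iff)
  note hom = Sym_obj_hom[OF objs(1)] and closed = Sym_obj_closed
  have "(g \<otimes> \<psi> g') \<otimes> \<psi> (\<psi>' x) = \<chi> (\<chi>' x) \<otimes> (g \<otimes> \<psi> g')" if x: "x \<in> carrier K" for x
  proof -
    have "(g \<otimes> \<psi> g') \<otimes> \<psi> (\<psi>' x) = g \<otimes> \<psi> (g' \<otimes> \<psi>' x)"
      using x g g' objs closed by (simp add: m_assoc hom_mult[OF hom])
    also have "\<dots> = g \<otimes> \<psi> (\<chi>' x) \<otimes> \<psi> g'"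
      using x g g' objs closed by (simp add: nat' m_assoc hom_mult[OF hom])
    also have "\<dots> = \<chi> (\<chi>' x) \<otimes> (g \<otimes> \<psi> g')"
      using x g g' objs closed by (simp add: nat m_assoc)
    finally show ?thesis .
  qed
  then show ?thesis using objs g g' closed
    by (simp add: Sym_mor_iff Sym_obj_compose compose_eq)
qed

lemma Sym_endo_central:
  assumes "(\<psi>, \<psi>, g) \<in> mg_mor (Sym K)"
  shows "g \<in> center K"
proof -
  have \<psi>: "\<psi> \<in> mg_obj (Sym K)" and g: "g \<in> carrier K"
    and comm: "\<forall>x\<in>carrier K. g \<otimes> \<psi> x = \<psi> x \<otimes> g"
    using assms by (simp_all add: Sym_mor_iff)
  have "g \<otimes> y = y \<otimes> g" if "y \<in> carrier K" for y
  proof -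
    from that have "y \<in> \<psi> ` carrier K" using Sym_obj_surj[OF \<psi>] by simp
    then obtain x where x: "x \<in> carrier K" and y: "y = \<psi> x" by blast
    show ?thesis unfolding y using comm x by blast
  qed
  then show ?thesis unfolding center_def using g by blast
qed

end

definition nat_trans_to_id :: "('o, 'm) mgpd \<Rightarrow> ('o \<Rightarrow> 'o) \<Rightarrow> ('m \<Rightarrow> 'm) \<Rightarrow> ('o \<Rightarrow> 'm) \<Rightarrow> bool" where
  "nat_trans_to_id S Fo Fm \<theta> \<longleftrightarrow>
     (\<forall>x\<in>mg_obj S. mg_arr S (\<theta> x) (Fo x) x) \<and>
     (\<forall>f\<in>mg_mor S. mg_cmp S (\<theta> (mg_cod S f)) (Fm f) = mg_cmp S f (\<theta> (mg_dom S f)))"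

lemma monoidal_nat_iso_to_id:
  "monoidal_nat_iso S S Fo Fm muF epsF id id muG epsG \<theta> \<Longrightarrow> nat_trans_to_id S Fo Fm \<theta>"
  by (simp add: monoidal_nat_iso_def nat_trans_to_id_def)

locale Sym_equivalence =
  fixes K :: "'g monoid" (structure) and H :: "'h monoid" and A :: "'a monoid"
    and act :: "'h \<Rightarrow> 'a \<Rightarrow> 'a"
    and Fo :: "'h \<Rightarrow> 'g \<Rightarrow> 'g" and Fm :: "'a \<times> 'h \<Rightarrow> ('g \<Rightarrow> 'g) \<times> ('g \<Rightarrow> 'g) \<times> 'g"
    and mu :: "'h \<Rightarrow> 'h \<Rightarrow> ('g \<Rightarrow> 'g) \<times> ('g \<Rightarrow> 'g) \<times> 'g" and eps :: "('g \<Rightarrow> 'g) \<times> ('g \<Rightarrow> 'g) \<times> 'g"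
    and Go :: "('g \<Rightarrow> 'g) \<Rightarrow> 'h" and Gm :: "('g \<Rightarrow> 'g) \<times> ('g \<Rightarrow> 'g) \<times> 'g \<Rightarrow> 'a \<times> 'h"
    and nu :: "('g \<Rightarrow> 'g) \<Rightarrow> ('g \<Rightarrow> 'g) \<Rightarrow> 'a \<times> 'h" and eta :: "'a \<times> 'h"
    and \<theta> :: "'h \<Rightarrow> 'a \<times> 'h" and \<theta>' :: "('g \<Rightarrow> 'g) \<Rightarrow> ('g \<Rightarrow> 'g) \<times> ('g \<Rightarrow> 'g) \<times> 'g"
  assumes group_K: "group K" and module: "left_module H A act"
    and F: "monoidal_functor (elementary H A act) (Sym K) Fo Fm mu eps"
    and G: "monoidal_functor (Sym K) (elementary H A act) Go Gm nu eta"
    and GF: "nat_trans_to_id (elementary H A act) (Go \<circ> Fo) (Gm \<circ> Fm) \<theta>"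
    and FG: "nat_trans_to_id (Sym K) (Fo \<circ> Go) (Fm \<circ> Gm) \<theta>'"

lemma split_2group_Sym_equivalence:
  assumes "group K" and "split_2group (Sym K) H A act"
  obtains Fo Fm mu eps Go Gm nu eta \<theta> \<theta>'
  where "Sym_equivalence K H A act Fo Fm mu eps Go Gm nu eta \<theta> \<theta>'"
proof -
  from assms(2) obtain Fo Fm mu eps Go Gm nu eta \<theta> \<theta>' where
    "left_module H A act"
    "monoidal_functor (elementary H A act) (Sym K) Fo Fm mu eps"
    "monoidal_functor (Sym K) (elementary H A act) Go Gm nu eta"
    "monoidal_nat_iso (elementary H A act) (elementary H A act) (Go \<circ> Fo) (Gm \<circ> Fm)
       (\<lambda>x y. mg_cmp (elementary H A act) (Gm (mu x y)) (nu (Fo x) (Fo y)))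
       (mg_cmp (elementary H A act) (Gm eps) eta) id id
       (\<lambda>x y. mg_idn (elementary H A act) (mg_tno (elementary H A act) x y))
       (mg_idn (elementary H A act) (mg_unt (elementary H A act))) \<theta>"
    "monoidal_nat_iso (Sym K) (Sym K) (Fo \<circ> Go) (Fm \<circ> Gm)
       (\<lambda>x y. mg_cmp (Sym K) (Fm (nu x y)) (mu (Go x) (Go y))) (mg_cmp (Sym K) (Fm eta) eps) id id
       (\<lambda>x y. mg_idn (Sym K) (mg_tno (Sym K) x y)) (mg_idn (Sym K) (mg_unt (Sym K))) \<theta>'"
    unfolding split_2group_def mg_equivalent_def by (elim conjE exE) (intro that)
  with assms(1) show thesis
    by (intro that[of Fo Fm mu eps Go Gm nu eta \<theta> \<theta>']) (simp add: Sym_equivalence_def monoidal_nat_iso_to_id)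
qed

context Sym_equivalence
begin

sublocale group K by (rule group_K)
sublocale A: comm_group A using module by (simp add: left_module_def)
sublocale H: group H using module by (simp add: left_module_def)

lemma act_hom: "y \<in> carrier H \<Longrightarrow> act y \<in> hom A A"
  using module by (simp add: left_module_def)

lemma act_one: "y \<in> carrier H \<Longrightarrow> act y \<one>\<^bsub>A\<^esub> = \<one>\<^bsub>A\<^esub>"
  by (rule hom_one[OF act_hom A.is_group A.is_group])

lemma act_closed: "y \<in> carrier H \<Longrightarrow> c \<in> carrier A \<Longrightarrow> act y c \<in> carrier A"
  by (rule hom_in_carrier[OF act_hom])

lemma act_unit: "c \<in> carrier A \<Longrightarrow> act \<one>\<^bsub>H\<^esub> c = c"
  using module by (simp add: left_module_def)

lemma F_obj: "y \<in> carrier H \<Longrightarrow> Fo y \<in> mg_obj (Sym K)"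
  using F by (simp add: monoidal_functor_def mg_functor_def Pi_iff)

lemma F_mor:
  assumes "c \<in> carrier A" "y \<in> carrier H"
  shows "Fm (c, y) \<in> mg_mor (Sym K)" and "fst (Fm (c, y)) = Fo y" and "fst (snd (Fm (c, y))) = Fo y"
  using F assms by (auto simp: monoidal_functor_def mg_functor_def mg_arr_def)

lemma F_idn: "y \<in> carrier H \<Longrightarrow> Fm (\<one>\<^bsub>A\<^esub>, y) = (Fo y, Fo y, \<one>)"
  using F by (simp add: monoidal_functor_def mg_functor_def)

lemma mu_mor: "x \<in> carrier H \<Longrightarrow> y \<in> carrier H \<Longrightarrow> mu x y \<in> mg_mor (Sym K)"
  using F by (simp add: monoidal_functor_def mg_arr_def)

lemma mu_natural:
  assumes "f \<in> carrier A \<times> carrier H" "g \<in> carrier A \<times> carrier H"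
  shows "mg_cmp (Sym K) (mu (snd f) (snd g)) (mg_tnm (Sym K) (Fm f) (Fm g)) =
    mg_cmp (Sym K) (Fm (mg_tnm (elementary H A act) f g)) (mu (snd f) (snd g))"
proof -
  have "\<forall>f\<in>mg_mor (elementary H A act). \<forall>g\<in>mg_mor (elementary H A act).
    mg_cmp (Sym K) (mu (mg_cod (elementary H A act) f) (mg_cod (elementary H A act) g))
      (mg_tnm (Sym K) (Fm f) (Fm g)) =
    mg_cmp (Sym K) (Fm (mg_tnm (elementary H A act) f g))
      (mu (mg_dom (elementary H A act) f) (mg_dom (elementary H A act) g))"
    using F unfolding monoidal_functor_def by blast
  then show ?thesis using assms unfolding elementary_structure(2-4) by blast
qed

lemma G_obj: "\<psi> \<in> mg_obj (Sym K) \<Longrightarrow> Go \<psi> \<in> carrier H"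
  using G by (simp add: monoidal_functor_def mg_functor_def Pi_iff)

lemma G_mor:
  "f \<in> mg_mor (Sym K) \<Longrightarrow> Gm f \<in> carrier A \<times> carrier H \<and> snd (Gm f) = Go (fst f)"
  using G by (simp add: monoidal_functor_def mg_functor_def mg_arr_def)

lemma G_idn: "\<psi> \<in> mg_obj (Sym K) \<Longrightarrow> Gm (\<psi>, \<psi>, \<one>) = (\<one>\<^bsub>A\<^esub>, Go \<psi>)"
  using G by (simp add: monoidal_functor_def mg_functor_def)

lemma nu_closed:
  "\<psi> \<in> mg_obj (Sym K) \<Longrightarrow> \<chi> \<in> mg_obj (Sym K) \<Longrightarrow> nu \<psi> \<chi> \<in> carrier A \<times> carrier H"
  using G by (simp add: monoidal_functor_def mg_arr_def)

lemma eta_closed: "eta \<in> carrier A \<times> carrier H"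
  using G by (simp add: monoidal_functor_def mg_arr_def)

lemma nu_natural:
  assumes "f \<in> mg_mor (Sym K)" "g \<in> mg_mor (Sym K)"
  shows "mg_cmp (elementary H A act) (nu (fst (snd f)) (fst (snd g))) (mg_tnm (elementary H A act) (Gm f) (Gm g)) =
    mg_cmp (elementary H A act) (Gm (mg_tnm (Sym K) f g)) (nu (fst f) (fst g))"
proof -
  have "\<forall>f\<in>mg_mor (Sym K). \<forall>g\<in>mg_mor (Sym K).
    mg_cmp (elementary H A act) (nu (mg_cod (Sym K) f) (mg_cod (Sym K) g))
      (mg_tnm (elementary H A act) (Gm f) (Gm g)) =
    mg_cmp (elementary H A act) (Gm (mg_tnm (Sym K) f g)) (nu (mg_dom (Sym K) f) (mg_dom (Sym K) g))"
    using G unfolding monoidal_functor_def by blast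
  then show ?thesis using assms unfolding Sym_structure(1,2) by blast
qed

lemma nu_lunit:
  assumes "\<psi> \<in> mg_obj (Sym K)"
  shows "fst (nu (restrict id (carrier K)) \<psi>) \<otimes>\<^bsub>A\<^esub> fst eta = \<one>\<^bsub>A\<^esub>"
proof -
  have "mg_cmp (elementary H A act) (Gm (mg_lun (Sym K) \<psi>))
      (mg_cmp (elementary H A act) (nu (mg_unt (Sym K)) \<psi>)
        (mg_tnm (elementary H A act) eta (mg_idn (elementary H A act) (Go \<psi>))))
    = mg_lun (elementary H A act) (Go \<psi>)"
    using G assms unfolding monoidal_functor_def by blast
  then show ?thesis
    using assms G_idn eta_closed nu_closed[OF Sym_unit_obj assms] act_one by (simp add: mem_Times_iff)
qed

lemma nu_runit:
  assumes "\<psi> \<in> mg_obj (Sym K)"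
  shows "fst (nu \<psi> (restrict id (carrier K))) \<otimes>\<^bsub>A\<^esub> act (Go \<psi>) (fst eta) = \<one>\<^bsub>A\<^esub>"
proof -
  have "mg_cmp (elementary H A act) (Gm (mg_run (Sym K) \<psi>))
      (mg_cmp (elementary H A act) (nu \<psi> (mg_unt (Sym K)))
        (mg_tnm (elementary H A act) (mg_idn (elementary H A act) (Go \<psi>)) eta))
    = mg_run (elementary H A act) (Go \<psi>)"
    using G assms unfolding monoidal_functor_def by blast
  then show ?thesis
    using assms G_idn eta_closed nu_closed[OF assms Sym_unit_obj] act_closed G_obj
    by (simp add: mem_Times_iff)
qed

lemma nu_assoc:
  assumes "\<psi> \<in> mg_obj (Sym K)" "\<chi> \<in> mg_obj (Sym K)" "\<rho> \<in> mg_obj (Sym K)"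
  shows "fst (nu (compose (carrier K) \<psi> \<chi>) \<rho>) \<otimes>\<^bsub>A\<^esub> fst (nu \<psi> \<chi>) =
    fst (nu \<psi> (compose (carrier K) \<chi> \<rho>)) \<otimes>\<^bsub>A\<^esub> act (Go \<psi>) (fst (nu \<chi> \<rho>))"
proof -
  have "mg_cmp (elementary H A act) (Gm (mg_asc (Sym K) \<psi> \<chi> \<rho>))
      (mg_cmp (elementary H A act) (nu (mg_tno (Sym K) \<psi> \<chi>) \<rho>)
        (mg_tnm (elementary H A act) (nu \<psi> \<chi>) (mg_idn (elementary H A act) (Go \<rho>)))) =
    mg_cmp (elementary H A act) (nu \<psi> (mg_tno (Sym K) \<chi> \<rho>))
      (mg_cmp (elementary H A act) (mg_tnm (elementary H A act) (mg_idn (elementary H A act) (Go \<psi>)) (nu \<chi> \<rho>))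
        (mg_asc (elementary H A act) (Go \<psi>) (Go \<chi>) (Go \<rho>)))"
    using G assms unfolding monoidal_functor_def by blast
  moreover have "Gm (mg_asc (Sym K) \<psi> \<chi> \<rho>) = (\<one>\<^bsub>A\<^esub>, Go (compose (carrier K) \<psi> (compose (carrier K) \<chi> \<rho>)))"
    using assms by (simp add: Let_def G_idn Sym_obj_compose[OF group_K])
  ultimately show ?thesis
    using assms nu_closed Sym_obj_compose[OF group_K] act_closed act_one G_obj by (simp add: Let_def mem_Times_iff)
qed

lemma F_faithful:
  assumes c: "c \<in> carrier A" and c': "c' \<in> carrier A" and y: "y \<in> carrier H"
    and eq: "Fm (c, y) = Fm (c', y)"
  shows "c = c'"
proof -
  have \<theta>y: "fst (\<theta> y) \<in> carrier A"
    using GF y by (auto simp: nat_trans_to_id_def mg_arr_def)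
  have "fst (\<theta> y) \<otimes>\<^bsub>A\<^esub> fst (Gm (Fm (d, y))) = d \<otimes>\<^bsub>A\<^esub> fst (\<theta> y)"
    if "d \<in> carrier A" for d
    using GF that y unfolding nat_trans_to_id_def by force
  then have "c \<otimes>\<^bsub>A\<^esub> fst (\<theta> y) = c' \<otimes>\<^bsub>A\<^esub> fst (\<theta> y)"
    using c c' eq by metis
  then show ?thesis using A.right_cancel[OF \<theta>y c c'] by simp
qed

lemma G_faithful:
  assumes f: "(\<psi>, \<chi>, g) \<in> mg_mor (Sym K)" and f': "(\<psi>, \<chi>, g') \<in> mg_mor (Sym K)"
    and eq: "Gm (\<psi>, \<chi>, g) = Gm (\<psi>, \<chi>, g')"
  shows "g = g'"
proof -
  have "\<theta>' \<psi> \<in> mg_mor (Sym K)"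
    using FG f by (auto simp: nat_trans_to_id_def mg_arr_def Sym_mor_iff)
  then have t: "snd (snd (\<theta>' \<psi>)) \<in> carrier K" by (rule Sym_mor_component[OF group_K])
  have "snd (snd (\<theta>' \<chi>)) \<otimes> snd (snd (Fm (Gm (\<psi>, \<chi>, d)))) = d \<otimes> snd (snd (\<theta>' \<psi>))"
    if "(\<psi>, \<chi>, d) \<in> mg_mor (Sym K)" for d
    using FG that unfolding nat_trans_to_id_def by force
  then have "g \<otimes> snd (snd (\<theta>' \<psi>)) = g' \<otimes> snd (snd (\<theta>' \<psi>))"
    using f f' eq by metis
  then show ?thesis using right_cancel[OF t] f f' by (simp add: Sym_mor_iff)
qed

lemma F_component_central:
  assumes "c \<in> carrier A" "y \<in> carrier H"
  shows "snd (snd (Fm (c, y))) \<in> center K"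
proof -
  have "(Fo y, Fo y, snd (snd (Fm (c, y)))) \<in> mg_mor (Sym K)"
    using F_mor[OF assms] by (metis prod.collapse)
  then show ?thesis by (rule Sym_endo_central[OF group_K])
qed

lemma F_component_whisker_left:
  assumes c: "c \<in> carrier A" and y: "y \<in> carrier H"
  shows "snd (snd (Fm (c, y))) = snd (snd (Fm (c, \<one>\<^bsub>H\<^esub>)))"
proof -
  let ?w = "snd (snd (Fm (c, \<one>\<^bsub>H\<^esub>)))" and ?m = "snd (snd (mu \<one>\<^bsub>H\<^esub> y))"
  have w: "?w \<in> center K" using F_component_central c by simp
  then have wK: "?w \<in> carrier K" by (simp add: center_def)
  have m: "?m \<in> carrier K" using Sym_mor_component[OF group_K mu_mor] y by simp
  have X: "snd (snd (Fm (c, y))) \<in> carrier K" using Sym_mor_component[OF group_K F_mor(1)[OF c y]] .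
  have "?m \<otimes> (?w \<otimes> Fo \<one>\<^bsub>H\<^esub> \<one>) = snd (snd (Fm (c, y))) \<otimes> ?m"
    using mu_natural[of "(c, \<one>\<^bsub>H\<^esub>)" "(\<one>\<^bsub>A\<^esub>, y)"] c y act_unit
    by (simp add: F_idn F_mor(2))
  moreover have "Fo \<one>\<^bsub>H\<^esub> \<one> = \<one>" using Sym_obj_one[OF group_K F_obj] by simp
  ultimately have "snd (snd (Fm (c, y))) \<otimes> ?m = ?m \<otimes> ?w" using wK by simp
  also have "\<dots> = ?w \<otimes> ?m" using w m by (simp add: center_def)
  finally show ?thesis using right_cancel[OF m X wK] by simp
qed

lemma F_component_whisker_right:
  assumes c: "c \<in> carrier A" and y: "y \<in> carrier H"
  shows "snd (snd (Fm (act y c, y))) = Fo y (snd (snd (Fm (c, \<one>\<^bsub>H\<^esub>))))"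
proof -
  let ?w = "Fo y (snd (snd (Fm (c, \<one>\<^bsub>H\<^esub>))))" and ?m = "snd (snd (mu y \<one>\<^bsub>H\<^esub>))"
  have w: "?w \<in> center K"
    using iso_maps_center F_obj[OF y] F_component_central c by (simp add: Sym_obj_iff)
  then have wK: "?w \<in> carrier K" by (simp add: center_def)
  have m: "?m \<in> carrier K" using Sym_mor_component[OF group_K mu_mor] y by simp
  have X: "snd (snd (Fm (act y c, y))) \<in> carrier K"
    using Sym_mor_component[OF group_K F_mor(1)[OF act_closed[OF y c] y]] .
  have "?m \<otimes> (\<one> \<otimes> ?w) = snd (snd (Fm (act y c, y))) \<otimes> ?m"
    using mu_natural[of "(\<one>\<^bsub>A\<^esub>, y)" "(c, \<one>\<^bsub>H\<^esub>)"] c y act_closed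
    by (simp add: F_idn)
  then have "snd (snd (Fm (act y c, y))) \<otimes> ?m = ?m \<otimes> ?w" using wK by simp
  also have "\<dots> = ?w \<otimes> ?m" using w m by (simp add: center_def)
  finally show ?thesis using right_cancel[OF m X wK] by simp
qed

lemma act_trivial:
  assumes center_fixed: "\<And>\<psi> w. \<psi> \<in> mg_obj (Sym K) \<Longrightarrow> w \<in> center K \<Longrightarrow> \<psi> w = w"
    and y: "y \<in> carrier H" and c: "c \<in> carrier A"
  shows "act y c = c"
proof -
  have "snd (snd (Fm (act y c, y))) = Fo y (snd (snd (Fm (c, \<one>\<^bsub>H\<^esub>))))"
    by (rule F_component_whisker_right[OF c y])
  also have "\<dots> = snd (snd (Fm (c, \<one>\<^bsub>H\<^esub>)))"
    using center_fixed[OF F_obj[OF y] F_component_central[OF c H.one_closed]] .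
  also have "\<dots> = snd (snd (Fm (c, y)))"
    by (rule F_component_whisker_left[OF c y, symmetric])
  finally have "snd (snd (Fm (act y c, y))) = snd (snd (Fm (c, y)))" .
  then have "Fm (act y c, y) = Fm (c, y)"
    using F_mor(2,3)[OF act_closed[OF y c] y] F_mor(2,3)[OF c y] by (simp add: prod_eq_iff)
  then show ?thesis using F_faithful act_closed y c by blast
qed

lemma nu_unit_comm:
  assumes trivial: "\<And>y c. y \<in> carrier H \<Longrightarrow> c \<in> carrier A \<Longrightarrow> act y c = c"
    and \<phi>: "\<phi> \<in> mg_obj (Sym K)"
  shows "fst (nu (restrict id (carrier K)) \<phi>) = fst (nu \<phi> (restrict id (carrier K)))"
    (is "?l = ?r")
proof -
  have e: "fst eta \<in> carrier A" using eta_closed by auto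
  have N: "?l \<in> carrier A" "?r \<in> carrier A"
    using nu_closed \<phi> Sym_unit_obj[OF group_K] by (simp_all add: mem_Times_iff)
  have "?l \<otimes>\<^bsub>A\<^esub> fst eta = ?r \<otimes>\<^bsub>A\<^esub> fst eta"
    using nu_lunit[OF \<phi>] nu_runit[OF \<phi>] trivial G_obj[OF \<phi>] e by simp
  then show ?thesis using A.right_cancel e N by simp
qed

lemma nu_square_comm:
  assumes trivial: "\<And>y c. y \<in> carrier H \<Longrightarrow> c \<in> carrier A \<Longrightarrow> act y c = c"
    and \<phi>: "\<phi> \<in> mg_obj (Sym K)"
  shows "fst (nu (compose (carrier K) \<phi> \<phi>) \<phi>) = fst (nu \<phi> (compose (carrier K) \<phi> \<phi>))"
proof -
  have N: "fst (nu \<phi> \<phi>) \<in> carrier A" "fst (nu (compose (carrier K) \<phi> \<phi>) \<phi>) \<in> carrier A"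
    "fst (nu \<phi> (compose (carrier K) \<phi> \<phi>)) \<in> carrier A"
    using nu_closed \<phi> Sym_obj_compose[OF group_K \<phi> \<phi>] by (simp_all add: mem_Times_iff)
  have "fst (nu (compose (carrier K) \<phi> \<phi>) \<phi>) \<otimes>\<^bsub>A\<^esub> fst (nu \<phi> \<phi>) =
    fst (nu \<phi> (compose (carrier K) \<phi> \<phi>)) \<otimes>\<^bsub>A\<^esub> fst (nu \<phi> \<phi>)"
    using nu_assoc[OF \<phi> \<phi> \<phi>] trivial G_obj[OF \<phi>] N by simp
  then show ?thesis using A.right_cancel N by simp
qed

lemma G_whiskerings_eq:
  assumes trivial: "\<And>y c. y \<in> carrier H \<Longrightarrow> c \<in> carrier A \<Longrightarrow> act y c = c"
    and \<phi>: "\<phi> \<in> mg_obj (Sym K)"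
    and \<alpha>: "(compose (carrier K) \<phi> \<phi>, restrict id (carrier K), h) \<in> mg_mor (Sym K)"
  shows "Gm (mg_tnm (Sym K) (compose (carrier K) \<phi> \<phi>, restrict id (carrier K), h) (\<phi>, \<phi>, \<one>)) =
    Gm (mg_tnm (Sym K) (\<phi>, \<phi>, \<one>) (compose (carrier K) \<phi> \<phi>, restrict id (carrier K), h))"
    (is "Gm ?a = Gm ?b")
proof -
  let ?I = "restrict id (carrier K)" and ?\<phi>\<phi> = "compose (carrier K) \<phi> \<phi>"
  let ?\<alpha> = "(?\<phi>\<phi>, ?I, h)"
  have \<phi>\<phi>: "?\<phi>\<phi> \<in> mg_obj (Sym K)" using Sym_obj_compose[OF group_K \<phi> \<phi>] .
  note idn = Sym_idn_mor[OF group_K \<phi>]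
  have a: "?a \<in> mg_mor (Sym K)" and b: "?b \<in> mg_mor (Sym K)"
    using Sym_tnm_mor[OF group_K \<alpha> idn] Sym_tnm_mor[OF group_K idn \<alpha>] by simp_all
  have G\<alpha>: "fst (Gm ?\<alpha>) \<in> carrier A" using G_mor[OF \<alpha>] by auto
  have Ga: "fst (Gm ?a) \<in> carrier A" and Gb: "fst (Gm ?b) \<in> carrier A"
    using G_mor[OF a] G_mor[OF b] by auto
  have N: "fst (nu \<phi> ?\<phi>\<phi>) \<in> carrier A" using nu_closed \<phi> \<phi>\<phi> by (simp add: mem_Times_iff)
  have nat_a: "fst (nu ?I \<phi>) \<otimes>\<^bsub>A\<^esub> fst (Gm ?\<alpha>) = fst (Gm ?a) \<otimes>\<^bsub>A\<^esub> fst (nu ?\<phi>\<phi> \<phi>)"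
    using arg_cong[where f = fst, OF nu_natural[OF \<alpha> idn]] G_idn[OF \<phi>] trivial G_obj[OF \<phi>\<phi>] G_mor[OF \<alpha>] G\<alpha>
    by (simp only: elementary_structure fst_conv snd_conv) simp
  have nat_b: "fst (nu \<phi> ?I) \<otimes>\<^bsub>A\<^esub> fst (Gm ?\<alpha>) = fst (Gm ?b) \<otimes>\<^bsub>A\<^esub> fst (nu \<phi> ?\<phi>\<phi>)"
    using arg_cong[where f = fst, OF nu_natural[OF idn \<alpha>]] G_idn[OF \<phi>] trivial G_obj[OF \<phi>] G\<alpha>
    by (simp only: elementary_structure fst_conv snd_conv) simp
  have "fst (Gm ?a) \<otimes>\<^bsub>A\<^esub> fst (nu \<phi> ?\<phi>\<phi>) = fst (Gm ?b) \<otimes>\<^bsub>A\<^esub> fst (nu \<phi> ?\<phi>\<phi>)"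
    using nat_a nat_b nu_unit_comm[OF trivial \<phi>] nu_square_comm[OF trivial \<phi>] by simp
  then have "fst (Gm ?a) = fst (Gm ?b)" using A.right_cancel Ga Gb N by simp
  moreover have "snd (Gm ?a) = snd (Gm ?b)"
    using G_mor[OF a] G_mor[OF b] Sym_compose_assoc[OF group_K \<phi>] by simp
  ultimately show ?thesis by (simp add: prod_eq_iff)
qed

lemma square_conjugator_fixed:
  assumes center_fixed: "\<And>\<psi> w. \<psi> \<in> mg_obj (Sym K) \<Longrightarrow> w \<in> center K \<Longrightarrow> \<psi> w = w"
    and \<phi>: "\<phi> \<in> mg_obj (Sym K)" and h: "h \<in> carrier K"
    and conj: "\<And>x. x \<in> carrier K \<Longrightarrow> h \<otimes> \<phi> (\<phi> x) = x \<otimes> h"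
  shows "\<phi> h = h"
proof -
  let ?I = "restrict id (carrier K)" and ?\<phi>\<phi> = "compose (carrier K) \<phi> \<phi>"
  have \<alpha>: "(?\<phi>\<phi>, ?I, h) \<in> mg_mor (Sym K)"
    using Sym_obj_compose[OF group_K \<phi> \<phi>] Sym_unit_obj[OF group_K] h conj
    by (simp add: Sym_mor_iff compose_eq)
  note idn = Sym_idn_mor[OF group_K \<phi>]
  have "Gm (mg_tnm (Sym K) (?\<phi>\<phi>, ?I, h) (\<phi>, \<phi>, \<one>)) = Gm (mg_tnm (Sym K) (\<phi>, \<phi>, \<one>) (?\<phi>\<phi>, ?I, h))"
    using G_whiskerings_eq[OF _ \<phi> \<alpha>] act_trivial center_fixed by blast
  moreover have "mg_tnm (Sym K) (?\<phi>\<phi>, ?I, h) (\<phi>, \<phi>, \<one>) = (compose (carrier K) \<phi> ?\<phi>\<phi>, \<phi>, h)"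
    using Sym_compose_assoc[OF group_K \<phi>] Sym_unit_compose[OF group_K \<phi>]
      Sym_obj_one[OF group_K Sym_obj_compose[OF group_K \<phi> \<phi>]] h by simp
  moreover have "mg_tnm (Sym K) (\<phi>, \<phi>, \<one>) (?\<phi>\<phi>, ?I, h) = (compose (carrier K) \<phi> ?\<phi>\<phi>, \<phi>, \<phi> h)"
    using Sym_unit_compose[OF group_K \<phi>] Sym_obj_closed[OF group_K \<phi> h] by simp
  ultimately show ?thesis
    using G_faithful Sym_tnm_mor[OF group_K \<alpha> idn] Sym_tnm_mor[OF group_K idn \<alpha>] by force
qed

end

theorem Sym_not_split:
  fixes K :: "'g monoid" and H :: "'h monoid" and A :: "'a monoid"
  assumes K: "group K"
    and center_fixed: "\<And>\<psi> w. \<psi> \<in> mg_obj (Sym K) \<Longrightarrow> w \<in> center K \<Longrightarrow> \<psi> w = w"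
    and \<phi>: "\<phi> \<in> mg_obj (Sym K)" and h: "h \<in> carrier K"
    and conj: "\<And>x. x \<in> carrier K \<Longrightarrow> h \<otimes>\<^bsub>K\<^esub> \<phi> (\<phi> x) = x \<otimes>\<^bsub>K\<^esub> h"
    and moved: "\<phi> h \<noteq> h"
  shows "\<not> split_2group (Sym K) H A act"
proof
  assume "split_2group (Sym K) H A act"
  then obtain Fo Fm mu eps Go Gm nu eta \<theta> \<theta>'
    where eqv: "Sym_equivalence K H A act Fo Fm mu eps Go Gm nu eta \<theta> \<theta>'"
    by (rule split_2group_Sym_equivalence[OF K])
  have "\<phi> h = h"
    by (rule Sym_equivalence.square_conjugator_fixed[OF eqv]) (simp_all add: center_fixed \<phi> h conj)
  with moved show False by contradiction
qed

lemma mod_add_mult_mod: "(a + u * (b mod n)) mod n = (a + u * b) mod (n :: int)"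
  by (metis mod_add_right_eq mod_mult_right_eq)

lemma dihedral_carrier: "carrier (dihedral n) = {0..<int n} \<times> UNIV"
  by (simp add: dihedral_def)

lemma finite_dihedral: "finite (carrier (dihedral n))"
  by (simp add: dihedral_carrier)

lemma dihedral_one: "\<one>\<^bsub>dihedral n\<^esub> = (0, False)"
  by (simp add: dihedral_def)

lemma dihedral_mult:
  "(i, b) \<otimes>\<^bsub>dihedral n\<^esub> (j, c) = ((i + (if b then - j else j)) mod int n, b \<noteq> c)"
  by (simp add: dihedral_def)

lemma dihedral_group: assumes "n > 0" shows "group (dihedral n)"
proof (rule groupI)
  fix x y assume "x \<in> carrier (dihedral n)" "y \<in> carrier (dihedral n)"
  then show "x \<otimes>\<^bsub>dihedral n\<^esub> y \<in> carrier (dihedral n)" using assms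
    by (cases x; cases y) (simp add: dihedral_carrier dihedral_mult)
next
  show "\<one>\<^bsub>dihedral n\<^esub> \<in> carrier (dihedral n)"
    using assms by (simp add: dihedral_carrier dihedral_one)
next
  fix x y z
  show "x \<otimes>\<^bsub>dihedral n\<^esub> y \<otimes>\<^bsub>dihedral n\<^esub> z = x \<otimes>\<^bsub>dihedral n\<^esub> (y \<otimes>\<^bsub>dihedral n\<^esub> z)"
    by (cases x; cases y; cases z) (auto simp: dihedral_mult mod_simps algebra_simps)
next
  fix x assume "x \<in> carrier (dihedral n)"
  then show "\<one>\<^bsub>dihedral n\<^esub> \<otimes>\<^bsub>dihedral n\<^esub> x = x"
    by (cases x) (simp add: dihedral_carrier dihedral_mult dihedral_one)
next
  fix x assume x: "x \<in> carrier (dihedral n)"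
  obtain i b where xb: "x = (i, b)" by (cases x)
  let ?y = "if b then (i, True) else ((- i) mod int n, False)"
  have "?y \<in> carrier (dihedral n)" "?y \<otimes>\<^bsub>dihedral n\<^esub> x = \<one>\<^bsub>dihedral n\<^esub>"
    using x assms by (auto simp: xb dihedral_carrier dihedral_mult dihedral_one mod_simps)
  then show "\<exists>y\<in>carrier (dihedral n). y \<otimes>\<^bsub>dihedral n\<^esub> x = \<one>\<^bsub>dihedral n\<^esub>" by blast
qed

lemma dihedral_center:
  assumes n: "n \<ge> 3"
  shows "center (dihedral n) \<subseteq> {(0, False), (int n div 2, False)}"
proof
  fix w assume w: "w \<in> center (dihedral n)"
  obtain i b where wb: "w = (i, b)" by (cases w)
  have i: "0 \<le> i" "i < int n" using w by (auto simp: wb center_def dihedral_carrier)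
  have commutes: "w \<otimes>\<^bsub>dihedral n\<^esub> x = x \<otimes>\<^bsub>dihedral n\<^esub> w" if "x \<in> carrier (dihedral n)" for x
    using w that by (simp add: center_def)
  have not_b: "\<not> b"
  proof
    assume b
    then have "(i - 1) mod int n = (1 + i) mod int n"
      using commutes[of "(1, False)"] n by (simp add: wb dihedral_carrier dihedral_mult)
    then have "int n dvd 2" by (simp add: mod_eq_dvd_iff)
    then show False using n zdvd_imp_le by fastforce
  qed
  have "i mod int n = (- i) mod int n"
    using commutes[of "(0, True)"] n not_b by (simp add: wb dihedral_carrier dihedral_mult)
  then have "int n dvd 2 * i" by (simp add: mod_eq_dvd_iff)
  have "2 * i = 0 \<or> 2 * i = int n"
  proof (cases "2 * i < int n")
    case True
    then show ?thesis using \<open>int n dvd 2 * i\<close> i zdvd_imp_le[of "int n" "2 * i"] by linarith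
  next
    case False
    have "int n dvd 2 * i - int n" using \<open>int n dvd 2 * i\<close> by simp
    then show ?thesis using False i zdvd_imp_le[of "int n" "2 * i - int n"] by linarith
  qed
  then have "i = 0 \<or> i = int n div 2" by auto
  with not_b show "w \<in> {(0, False), (int n div 2, False)}" by (auto simp: wb)
qed

text \<open>The endomorphism \<open>r \<mapsto> r\<^sup>u\<close>, \<open>s \<mapsto> r\<^sup>t s\<close> of \<open>D\<^sub>n\<close>.\<close>
definition dihedral_aut :: "nat \<Rightarrow> int \<Rightarrow> int \<Rightarrow> int \<times> bool \<Rightarrow> int \<times> bool" where
  "dihedral_aut n u t =
     restrict (\<lambda>(i, b). ((u * i + (if b then t else 0)) mod int n, b)) (carrier (dihedral n))"

lemma dihedral_aut_apply:
  "(i, b) \<in> carrier (dihedral n) \<Longrightarrow> dihedral_aut n u t (i, b) = ((u * i + (if b then t else 0)) mod int n, b)"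
  by (simp add: dihedral_aut_def)

lemma dihedral_aut_closed:
  "n > 0 \<Longrightarrow> x \<in> carrier (dihedral n) \<Longrightarrow> dihedral_aut n u t x \<in> carrier (dihedral n)"
  by (cases x) (simp add: dihedral_aut_apply dihedral_carrier)

lemma dihedral_aut_hom:
  assumes n: "n > 0"
  shows "dihedral_aut n u t \<in> hom (dihedral n) (dihedral n)"
proof (rule homI)
  fix x y assume x: "x \<in> carrier (dihedral n)" and y: "y \<in> carrier (dihedral n)"
  obtain i b j c where xy: "x = (i, b)" "y = (j, c)" by (cases x, cases y)
  have "x \<otimes>\<^bsub>dihedral n\<^esub> y \<in> carrier (dihedral n)"
    using x y group.is_monoid[OF dihedral_group[OF n]] by (simp add: monoid.m_closed)
  then show "dihedral_aut n u t (x \<otimes>\<^bsub>dihedral n\<^esub> y) =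
      dihedral_aut n u t x \<otimes>\<^bsub>dihedral n\<^esub> dihedral_aut n u t y"
    using x y unfolding xy
    by (cases b; cases c)
      (auto simp: dihedral_aut_def dihedral_mult mod_simps mod_add_mult_mod,
        simp_all add: algebra_simps mod_add_mult_mod)
qed (rule dihedral_aut_closed[OF n])

lemma dihedral_aut_inj:
  assumes n: "n > 0" and u: "coprime u (int n)"
  shows "inj_on (dihedral_aut n u t) (carrier (dihedral n))"
proof (rule inj_onI)
  fix x y assume x: "x \<in> carrier (dihedral n)" and y: "y \<in> carrier (dihedral n)"
    and eq: "dihedral_aut n u t x = dihedral_aut n u t y"
  obtain i b j c where xy: "x = (i, b)" "y = (j, c)" by (cases x, cases y)
  have bc: "b = c" using eq x y by (simp add: xy dihedral_aut_apply)
  have "(u * i + (if b then t else 0)) mod int n = (u * j + (if b then t else 0)) mod int n"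
    using eq x y by (simp add: xy bc dihedral_aut_apply)
  then have "int n dvd (u * i + (if b then t else 0)) - (u * j + (if b then t else 0))"
    by (simp add: mod_eq_dvd_iff)
  then have "int n dvd u * (i - j)" by (simp add: algebra_simps)
  then have "int n dvd i - j" using u by (simp add: coprime_dvd_mult_right_iff coprime_commute)
  then have "i mod int n = j mod int n" by (simp add: mod_eq_dvd_iff)
  then have "i = j" using x y by (simp add: xy dihedral_carrier)
  then show "x = y" using bc xy by simp
qed

lemma dihedral_aut_Sym_obj:
  assumes n: "n > 0" and u: "coprime u (int n)"
  shows "dihedral_aut n u t \<in> mg_obj (Sym (dihedral n))"
proof -
  have "dihedral_aut n u t ` carrier (dihedral n) \<subseteq> carrier (dihedral n)"
    using dihedral_aut_closed[OF n] by blast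
  then have "dihedral_aut n u t ` carrier (dihedral n) = carrier (dihedral n)"
    using endo_inj_surj dihedral_aut_inj[OF n u] by (metis finite_dihedral)
  then show ?thesis using dihedral_aut_hom[OF n] dihedral_aut_inj[OF n u]
    by (simp add: Sym_obj_iff iso_def bij_betw_def dihedral_aut_def)
qed

lemma dihedral_aut_compose:
  assumes n: "n > 0" and x: "x \<in> carrier (dihedral n)"
  shows "dihedral_aut n u t (dihedral_aut n u' t' x) = dihedral_aut n (u * u') (u * t' + t) x"
  using dihedral_aut_closed[OF n x] x
  by (cases x)
    (simp add: dihedral_aut_apply mod_simps mod_add_mult_mod; simp add: algebra_simps mod_add_mult_mod)

lemma dihedral_aut_cong:
  assumes "u mod int n = u' mod int n" and "t mod int n = t' mod int n"
  shows "dihedral_aut n u t = dihedral_aut n u' t'"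
proof -
  have "(u * i + (if b then t else 0)) mod int n = (u' * i + (if b then t' else 0)) mod int n" for i b
    using assms by (intro mod_add_cong mod_mult_cong) auto
  then show ?thesis by (simp add: dihedral_aut_def fun_eq_iff)
qed

lemma dihedral_rotation_conj:
  assumes "x \<in> carrier (dihedral n)"
  shows "(a, False) \<otimes>\<^bsub>dihedral n\<^esub> dihedral_aut n 1 (- 2 * a) x = x \<otimes>\<^bsub>dihedral n\<^esub> (a, False)"
  using assms by (cases x) (auto simp: dihedral_aut_apply dihedral_mult mod_simps algebra_simps)

lemma dihedral_center_fixed:
  assumes "n \<ge> 3" and "\<psi> \<in> mg_obj (Sym (dihedral n))" and "w \<in> center (dihedral n)"
  shows "\<psi> w = w"
proof -
  have "group (dihedral n)" using assms(1) by (intro dihedral_group) simp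
  moreover have "center (dihedral n) \<subseteq> {\<one>\<^bsub>dihedral n\<^esub>, (int n div 2, False)}"
    using dihedral_center[OF assms(1)] by (simp add: dihedral_one)
  ultimately show ?thesis
    using group.iso_fixes_small_center assms(2,3) by (metis Sym_obj_iff)
qed

lemma coprime_4k_plus_1_8k: "coprime (4 * int k + 1) (int (8 * k))"
proof (rule coprimeI)
  fix d assume "d dvd 4 * int k + 1" "d dvd int (8 * k)"
  then have "d dvd (4 * int k + 1) * (4 * int k + 1) - int (8 * k) * (2 * int k + 1)"
    by (intro dvd_diff dvd_mult2 dvd_mult2) auto
  then show "is_unit d" by (simp add: algebra_simps)
qed

lemma dihedral_8k_aut_square:
  assumes "k \<ge> 1" and "x \<in> carrier (dihedral (8 * k))"
  shows "dihedral_aut (8 * k) (4 * int k + 1) 1 (dihedral_aut (8 * k) (4 * int k + 1) 1 x) =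
    dihedral_aut (8 * k) 1 (- 2 * (6 * int k - 1)) x"
proof -
  have u: "((4 * int k + 1) * (4 * int k + 1)) mod int (8 * k) = 1 mod int (8 * k)"
    unfolding mod_eq_dvd_iff by (rule dvdI[of _ _ "2 * int k + 1"]) (simp add: algebra_simps)
  have t: "((4 * int k + 1) * 1 + 1) mod int (8 * k) = (- 2 * (6 * int k - 1)) mod int (8 * k)"
    unfolding mod_eq_dvd_iff by (rule dvdI[of _ _ 2]) (simp add: algebra_simps)
  have "dihedral_aut (8 * k) (4 * int k + 1) 1 (dihedral_aut (8 * k) (4 * int k + 1) 1 x) =
    dihedral_aut (8 * k) ((4 * int k + 1) * (4 * int k + 1)) ((4 * int k + 1) * 1 + 1) x"
    using assms by (intro dihedral_aut_compose) simp_all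
  also have "\<dots> = dihedral_aut (8 * k) 1 (- 2 * (6 * int k - 1)) x"
    by (simp only: dihedral_aut_cong[OF u t])
  finally show ?thesis .
qed

lemma dihedral_8k_aut_moves:
  assumes "k \<ge> 1"
  shows "dihedral_aut (8 * k) (4 * int k + 1) 1 (6 * int k - 1, False) \<noteq> (6 * int k - 1, False)"
proof -
  have "((4 * int k + 1) * (6 * int k - 1)) mod int (8 * k) = (2 * int k - 1) mod int (8 * k)"
    unfolding mod_eq_dvd_iff by (rule dvdI[of _ _ "3 * int k"]) (simp add: algebra_simps)
  also have "\<dots> = 2 * int k - 1" using assms by (intro mod_pos_pos_trivial) auto
  finally show ?thesis using assms by (simp add: dihedral_aut_apply dihedral_carrier)
qed

theorem proposition4p24:
  fixes k :: nat
  assumes "k \<ge> 1"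
  shows "\<not> (\<exists>(H :: 'h monoid) (A :: 'a monoid) act.
             split_2group (Sym (dihedral (8 * k))) H A act)"
proof -
  let ?\<phi> = "dihedral_aut (8 * k) (4 * int k + 1) 1" and ?h = "(6 * int k - 1, False)"
  have n: "8 * k > 0" "8 * k \<ge> 3" using assms by simp_all
  have conj: "?h \<otimes>\<^bsub>dihedral (8 * k)\<^esub> ?\<phi> (?\<phi> x) = x \<otimes>\<^bsub>dihedral (8 * k)\<^esub> ?h"
    if "x \<in> carrier (dihedral (8 * k))" for x
    unfolding dihedral_8k_aut_square[OF assms that] by (rule dihedral_rotation_conj[OF that])
  have h: "?h \<in> carrier (dihedral (8 * k))" using assms by (simp add: dihedral_carrier)
  have "\<not> split_2group (Sym (dihedral (8 * k))) H A act" for H :: "'h monoid" and A :: "'a monoid" and act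
    using dihedral_group[OF n(1)] dihedral_center_fixed[OF n(2)] h conj
      dihedral_aut_Sym_obj[OF n(1) coprime_4k_plus_1_8k] dihedral_8k_aut_moves[OF assms]
    by (intro Sym_not_split[where \<phi> = ?\<phi> and h = ?h]) blast+
  then show ?thesis by blast
qed

end
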